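(* Let $G=(V,E,w)$ be a weighted graph with no isolated vertices, let $s\in[0,1]^V$, let $k\in\mathbb{N}$, and let $\alpha,\beta\ge 0$ be constants, not both zero. Consider the objective $F(s') := \alpha\, D(z') + \beta\, P(z')$ where $z'=(I+L)^{-1}s'$. Let $s'$ be a maximizer of $F$ over the feasible set $\{s'\in[0,1]^V : \|s'-s\|_0\le k\}$. Then for every $v\in V$, if $s'_v\neq s_v$ then $s'_v\in\{0,1\}$. (In particular this applies to maximizing disagreement alone, polarization alone, or $P+\lambda\frac{n}{m}D$ for $\lambda\ge 0$.)
   Context: $G=(V,E,w)$ is a weighted undirected graph on $n=|V|$ vertices with $m=|E|$ edges, with weights $w_{u,v}\in(0,1]$ for $(u,v)\in E$ and $w_{u,v}=0$ otherwise (and $w_{v,v}=0$). $L=\mathrm{Diag}(d)-A$ is the weighted Laplacian, where $A_{u,v}=w_{u,v}$ and $d_v=\sum_u w_{v,u}$. Given innate opinions $s\in[0,1]^V$, the (Friedkin–Johnsen) equilibrium opinions are $z=(I+L)^{-1}s$. Disagreement is $D(z)=\sum_{(u,v)\in E} w_{u,v}(z_u-z_v)^2$ and polarization is $P(z)=\sum_{v\in V}(z_v-\bar z)^2$ with $\bar z=\frac1n\sum_v z_v$. $\|x\|_0$ denotes the number of nonzero coordinates of $x$. *)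

theory Defs
  imports "HOL-Analysis.Analysis"
begin

text \<open>Weighted undirected graph on the finite vertex type 'n, given by its weight
function w (w u v = 0 iff (u,v) is not an edge).\<close>

definition weighted_graph :: "('n::finite \<Rightarrow> 'n \<Rightarrow> real) \<Rightarrow> bool" where
  "weighted_graph w \<longleftrightarrow>
     (\<forall>u v. w u v = w v u) \<and> (\<forall>u v. 0 \<le> w u v \<and> w u v \<le> 1) \<and> (\<forall>v. w v v = 0)"

definition no_isolated_vertices :: "('n::finite \<Rightarrow> 'n \<Rightarrow> real) \<Rightarrow> bool" where
  "no_isolated_vertices w \<longleftrightarrow> (\<forall>v. \<exists>u. w v u \<noteq> 0)"

definition degree :: "('n::finite \<Rightarrow> 'n \<Rightarrow> real) \<Rightarrow> 'n \<Rightarrow> real" where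
  "degree w v = (\<Sum>u\<in>UNIV. w v u)"

definition adjacency :: "('n::finite \<Rightarrow> 'n \<Rightarrow> real) \<Rightarrow> real^'n^'n" where
  "adjacency w = (\<chi> u v. w u v)"

definition laplacian :: "('n::finite \<Rightarrow> 'n \<Rightarrow> real) \<Rightarrow> real^'n^'n" where
  "laplacian w = (\<chi> u v. if u = v then degree w u else 0) - adjacency w"

definition fj_equilibrium :: "('n::finite \<Rightarrow> 'n \<Rightarrow> real) \<Rightarrow> real^'n \<Rightarrow> real^'n" where
  "fj_equilibrium w s = matrix_inv (mat 1 + laplacian w) *v s"

text \<open>Disagreement: sum over undirected edges; each unordered pair appears twice
in the ordered double sum, hence the factor 1/2.\<close>
definition disagreement :: "('n::finite \<Rightarrow> 'n \<Rightarrow> real) \<Rightarrow> real^'n \<Rightarrow> real" where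
  "disagreement w z = (1/2) * (\<Sum>u\<in>UNIV. \<Sum>v\<in>UNIV. w u v * (z$u - z$v)^2)"

definition polarization :: "real^'n::finite \<Rightarrow> real" where
  "polarization z = (\<Sum>v\<in>UNIV. (z$v - (\<Sum>u\<in>UNIV. z$u) / real CARD('n))^2)"

definition l0_norm :: "real^'n::finite \<Rightarrow> nat" where
  "l0_norm x = card {v. x$v \<noteq> 0}"

definition unit_cube :: "(real^'n::finite) set" where
  "unit_cube = {x. \<forall>v. 0 \<le> x$v \<and> x$v \<le> 1}"

end

theory Submission
  imports Defs
begin

text \<open>Changing only the innate opinion of a vertex v to s'_v + y moves the equilibrium
affinely, z = p + y q with q = (I + L)^{-1} e_v, so the objective is a quadratic in y with
leading coefficient \<alpha> D(q) + \<beta> P(q). This coefficient is positive: if q were constant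
across every edge then L q = 0, hence q = e_v, which is not constant across an edge at v.
A strictly convex function on [0, 1] exceeds its value at an interior point at one of
the endpoints, and both endpoints are feasible once s'_v \<noteq> s_v.\<close>

lemma laplacian_mult_vec:
  "(laplacian w *v x) $ u = (\<Sum>v\<in>UNIV. w u v * (x$u - x$v))"
proof -
  have "(laplacian w *v x) $ u = (\<Sum>v\<in>UNIV. ((if u = v then degree w u else 0) - w u v) * x$v)"
    by (simp add: laplacian_def adjacency_def matrix_vector_mult_def)
  also have "\<dots> = degree w u * x$u - (\<Sum>v\<in>UNIV. w u v * x$v)"
    by (simp add: left_diff_distrib sum_subtractf if_distrib[of "\<lambda>t. t * _"] cong: if_cong)
  also have "\<dots> = (\<Sum>v\<in>UNIV. w u v * (x$u - x$v))"
    by (simp add: degree_def sum_distrib_right right_diff_distrib sum_subtractf)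
  finally show ?thesis .
qed

lemma inner_laplacian_mult_vec:
  fixes w :: "'n::finite \<Rightarrow> 'n \<Rightarrow> real"
  assumes "\<And>u v. w u v = w v u"
  shows "x \<bullet> (laplacian w *v x) = disagreement w x"
proof -
  define S where "S = (\<Sum>u\<in>UNIV. \<Sum>v\<in>UNIV. w u v * (x$u * (x$u - x$v)))"
  have "S = (\<Sum>v\<in>UNIV. \<Sum>u\<in>UNIV. w v u * (x$u * (x$u - x$v)))"
    unfolding S_def by (subst sum.swap) (simp add: assms)
  hence "2 * S = (\<Sum>u\<in>UNIV. \<Sum>v\<in>UNIV. w u v * (x$u * (x$u - x$v)) + w u v * (x$v * (x$v - x$u)))"
    unfolding S_def by (simp add: sum.distrib)
  also have "\<dots> = (\<Sum>u\<in>UNIV. \<Sum>v\<in>UNIV. w u v * (x$u - x$v)^2)"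
    by (intro sum.cong refl) (simp add: power2_eq_square algebra_simps)
  finally have "2 * S = \<dots>" .
  moreover have "x \<bullet> (laplacian w *v x) = S"
    by (simp add: S_def inner_vec_def laplacian_mult_vec sum_distrib_left mult.left_commute)
  ultimately show ?thesis by (simp add: disagreement_def)
qed

lemma disagreement_nonneg: "weighted_graph w \<Longrightarrow> 0 \<le> disagreement w x"
  unfolding weighted_graph_def disagreement_def by (auto intro!: sum_nonneg)

lemma polarization_nonneg: "0 \<le> polarization x"
  unfolding polarization_def by (auto intro!: sum_nonneg)

lemma invertible_id_plus_laplacian:
  assumes "weighted_graph w"
  shows "invertible (mat 1 + laplacian w)"
  unfolding invertible_left_inverse matrix_left_invertible_ker
proof (intro allI impI)
  fix x assume ker: "(mat 1 + laplacian w) *v x = 0"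
  have "\<And>u v. w u v = w v u"
    using assms by (simp add: weighted_graph_def)
  hence "x \<bullet> ((mat 1 + laplacian w) *v x) = x \<bullet> x + disagreement w x"
    by (simp add: matrix_vector_mult_add_rdistrib inner_add_right inner_laplacian_mult_vec)
  hence "x \<bullet> x + disagreement w x = 0"
    using ker by simp
  thus "x = 0"
    using disagreement_nonneg[OF assms, of x] by (metis add_nonneg_eq_0_iff inner_eq_zero_iff inner_ge_zero)
qed

lemma invertible_mult_matrix_inv_vec:
  fixes N :: "'a::semiring_1^'n^'n"
  assumes "invertible N"
  shows "N *v (matrix_inv N *v y) = y"
proof -
  have "N ** matrix_inv N = mat 1 \<and> matrix_inv N ** N = mat 1"
    using assms unfolding invertible_def matrix_inv_def by (rule someI_ex)
  thus ?thesis by (simp add: matrix_vector_mul_assoc)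
qed

lemma fj_equilibrium_add_scaleR:
  "fj_equilibrium w (s + c *\<^sub>R e) = fj_equilibrium w s + c *\<^sub>R fj_equilibrium w e"
  by (simp add: fj_equilibrium_def matrix_vector_right_distrib matrix_vector_mult_scaleR)

lemma laplacian_mult_vec_eq_0:
  assumes "\<And>u v. w u v \<noteq> 0 \<Longrightarrow> x$u = x$v"
  shows "laplacian w *v x = 0"
proof -
  have edge_term: "w u v * (x$u - x$v) = 0" for u v
    using assms[of u v] by (cases "w u v = 0") auto
  show ?thesis
    by (simp add: vec_eq_iff laplacian_mult_vec edge_term)
qed

lemma disagreement_eq_0_imp:
  assumes "weighted_graph w" "disagreement w x = 0" "w u v \<noteq> 0"
  shows "x$u = x$v"
proof -
  have nonneg: "\<And>a b. 0 \<le> w a b * (x$a - x$b)^2"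
    using assms(1) by (simp add: weighted_graph_def)
  have "(\<Sum>a\<in>UNIV. \<Sum>b\<in>UNIV. w a b * (x$a - x$b)^2) = 0"
    using assms(2) by (simp add: disagreement_def)
  hence "\<forall>a. \<forall>b. w a b * (x$a - x$b)^2 = 0"
    using nonneg by (simp add: sum_nonneg sum_nonneg_eq_0_iff)
  hence "w u v * (x$u - x$v)^2 = 0" by blast
  thus ?thesis using assms(3) by simp
qed

lemma polarization_eq_0_imp:
  assumes "polarization x = 0"
  shows "x$u = x$v"
proof -
  define m where "m = (\<Sum>a\<in>UNIV. x$a) / real CARD('a)"
  have "(\<Sum>a\<in>UNIV. (x$a - m)^2) = 0"
    using assms by (simp add: polarization_def m_def)
  hence "\<forall>a. x$a = m" by (simp add: sum_nonneg_eq_0_iff)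
  thus ?thesis by simp
qed

lemma fj_equilibrium_axis_not_constant_on_edges:
  assumes "weighted_graph w" "no_isolated_vertices w"
  shows "\<exists>a b. w a b \<noteq> 0 \<and> fj_equilibrium w (axis v 1) $ a \<noteq> fj_equilibrium w (axis v 1) $ b"
proof (rule ccontr)
  define q where "q = fj_equilibrium w (axis v 1)"
  assume "\<not> ?thesis"
  hence "laplacian w *v q = 0"
    by (intro laplacian_mult_vec_eq_0) (auto simp: q_def)
  moreover have "(mat 1 + laplacian w) *v q = axis v 1"
    using invertible_mult_matrix_inv_vec[OF invertible_id_plus_laplacian[OF assms(1)]]
    by (simp add: q_def fj_equilibrium_def)
  ultimately have q: "q = axis v 1"
    by (simp add: matrix_vector_mult_add_rdistrib)
  obtain u where u: "w v u \<noteq> 0"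
    using assms(2) by (auto simp: no_isolated_vertices_def)
  hence "u \<noteq> v" using assms(1) by (auto simp: weighted_graph_def)
  with q have "q$v \<noteq> q$u" by (simp add: axis_def)
  with u \<open>\<not> ?thesis\<close> show False by (auto simp: q_def)
qed

lemma disagreement_fj_equilibrium_axis_pos:
  assumes "weighted_graph w" "no_isolated_vertices w"
  shows "0 < disagreement w (fj_equilibrium w (axis v 1))"
  using fj_equilibrium_axis_not_constant_on_edges[OF assms] disagreement_eq_0_imp[OF assms(1)]
    disagreement_nonneg[OF assms(1)] by (metis order_less_le)

lemma polarization_fj_equilibrium_axis_pos:
  assumes "weighted_graph w" "no_isolated_vertices w"
  shows "0 < polarization (fj_equilibrium w (axis v 1))"
  using fj_equilibrium_axis_not_constant_on_edges[OF assms] polarization_eq_0_imp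
    polarization_nonneg by (metis order_less_le)

definition disagreement_form :: "('n::finite \<Rightarrow> 'n \<Rightarrow> real) \<Rightarrow> real^'n \<Rightarrow> real^'n \<Rightarrow> real" where
  "disagreement_form w p q = (1/2) * (\<Sum>u\<in>UNIV. \<Sum>v\<in>UNIV. w u v * ((p$u - p$v) * (q$u - q$v)))"

lemma disagreement_add_scaleR:
  "disagreement w (p + y *\<^sub>R q) =
     disagreement w p + 2 * y * disagreement_form w p q + y^2 * disagreement w q"
proof -
  have "w u v * ((p + y *\<^sub>R q)$u - (p + y *\<^sub>R q)$v)^2 =
     w u v * (p$u - p$v)^2 + (2 * y) * (w u v * ((p$u - p$v) * (q$u - q$v)))
       + y^2 * (w u v * (q$u - q$v)^2)" for u v
    by (simp add: power2_eq_square algebra_simps)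
  hence "(\<Sum>u\<in>UNIV. \<Sum>v\<in>UNIV. w u v * ((p + y *\<^sub>R q)$u - (p + y *\<^sub>R q)$v)^2) =
      (\<Sum>u\<in>UNIV. \<Sum>v\<in>UNIV. w u v * (p$u - p$v)^2)
      + (2 * y) * (\<Sum>u\<in>UNIV. \<Sum>v\<in>UNIV. w u v * ((p$u - p$v) * (q$u - q$v)))
      + y^2 * (\<Sum>u\<in>UNIV. \<Sum>v\<in>UNIV. w u v * (q$u - q$v)^2)"
    by (simp add: sum.distrib sum_distrib_left)
  thus ?thesis
    by (simp add: disagreement_def disagreement_form_def ring_distribs)
qed

definition polarization_form :: "real^'n::finite \<Rightarrow> real^'n \<Rightarrow> real" where
  "polarization_form p q = (\<Sum>v\<in>UNIV.
     (p$v - (\<Sum>u\<in>UNIV. p$u) / real CARD('n)) * (q$v - (\<Sum>u\<in>UNIV. q$u) / real CARD('n)))"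

lemma polarization_add_scaleR:
  "polarization (p + y *\<^sub>R q) = polarization p + 2 * y * polarization_form p q + y^2 * polarization q"
proof -
  define mp where "mp = (\<Sum>u\<in>UNIV. p$u) / real CARD('a)"
  define mq where "mq = (\<Sum>u\<in>UNIV. q$u) / real CARD('a)"
  have "(\<Sum>u\<in>UNIV. (p + y *\<^sub>R q)$u) / real CARD('a) = mp + y * mq"
    by (simp add: mp_def mq_def sum.distrib sum_distrib_left add_divide_distrib)
  moreover have "((p + y *\<^sub>R q)$v - (mp + y * mq))^2 =
     (p$v - mp)^2 + 2 * y * ((p$v - mp) * (q$v - mq)) + y^2 * (q$v - mq)^2" for v
    by (simp add: power2_eq_square algebra_simps)
  ultimately show ?thesis
    by (simp add: polarization_def polarization_form_def mp_def[symmetric] mq_def[symmetric]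
        sum.distrib sum_distrib_left)
qed

lemma convex_quadratic_pos_at_endpoint:
  fixes a c y0 y1 :: real
  assumes "0 < a" "y0 < 0" "0 < y1"
  shows "0 < c * y0 + a * y0^2 \<or> 0 < c * y1 + a * y1^2"
proof (rule ccontr)
  assume "\<not> ?thesis"
  hence "y1 * (c * y0 + a * y0^2) \<le> 0" "0 \<le> y0 * (c * y1 + a * y1^2)"
    using assms by (simp_all add: mult_nonneg_nonpos mult_nonpos_nonpos)
  moreover have "y1 * (c * y0 + a * y0^2) - y0 * (c * y1 + a * y1^2) = a * (y0 * y1) * (y0 - y1)"
    by (simp add: power2_eq_square algebra_simps)
  moreover have "a * (y0 * y1) < 0"
    using assms by (simp add: mult_pos_neg mult_neg_pos)
  hence "0 < a * (y0 * y1) * (y0 - y1)"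
    using assms by (simp add: mult_neg_neg)
  ultimately show False by linarith
qed

lemma l0_norm_mono: "{v. x$v \<noteq> 0} \<subseteq> {v. y$v \<noteq> 0} \<Longrightarrow> l0_norm x \<le> l0_norm y"
  unfolding l0_norm_def by (simp add: card_mono)

lemma coordinate_update_feasible:
  assumes "s' \<in> unit_cube" "l0_norm (s' - s) \<le> k" "s'$v \<noteq> s$v" "0 \<le> x" "x \<le> 1"
  shows "s' + (x - s'$v) *\<^sub>R axis v 1 \<in> unit_cube"
    and "l0_norm (s' + (x - s'$v) *\<^sub>R axis v 1 - s) \<le> k"
proof -
  have upd: "(s' + (x - s'$v) *\<^sub>R axis v 1)$u = (if u = v then x else s'$u)" for u
    by (simp add: axis_def)
  show "s' + (x - s'$v) *\<^sub>R axis v 1 \<in> unit_cube"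
    using assms(1,4,5) unfolding unit_cube_def mem_Collect_eq upd by simp
  have "l0_norm (s' + (x - s'$v) *\<^sub>R axis v 1 - s) \<le> l0_norm (s' - s)"
    using assms(3) by (intro l0_norm_mono) (auto simp: axis_def)
  with assms(2) show "l0_norm (s' + (x - s'$v) *\<^sub>R axis v 1 - s) \<le> k" by linarith
qed

theorem theorem1p1:
  fixes w :: "'n::finite \<Rightarrow> 'n \<Rightarrow> real"
    and s s' :: "real^'n"
    and k :: nat
    and \<alpha> \<beta> :: real
  assumes "weighted_graph w"
    and "no_isolated_vertices w"
    and "s \<in> unit_cube"
    and "\<alpha> \<ge> 0" and "\<beta> \<ge> 0" and "\<not> (\<alpha> = 0 \<and> \<beta> = 0)"
    and "s' \<in> unit_cube" and "l0_norm (s' - s) \<le> k"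
    and "\<forall>t \<in> unit_cube. l0_norm (t - s) \<le> k \<longrightarrow>
           \<alpha> * disagreement w (fj_equilibrium w t) + \<beta> * polarization (fj_equilibrium w t)
         \<le> \<alpha> * disagreement w (fj_equilibrium w s') + \<beta> * polarization (fj_equilibrium w s')"
  shows "\<forall>v. s'$v \<noteq> s$v \<longrightarrow> s'$v = 0 \<or> s'$v = 1"
proof (intro allI impI)
  fix v assume changed: "s'$v \<noteq> s$v"
  show "s'$v = 0 \<or> s'$v = 1"
  proof (rule ccontr)
    assume "\<not> ?thesis"
    with \<open>s' \<in> unit_cube\<close> have interior: "0 < s'$v" "s'$v < 1"
      by (auto simp: unit_cube_def order_le_less)
    define F where "F z = \<alpha> * disagreement w z + \<beta> * polarization z" for z
    define p where "p = fj_equilibrium w s'"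
    define q where "q = fj_equilibrium w (axis v 1)"
    define c where "c = 2 * (\<alpha> * disagreement_form w p q + \<beta> * polarization_form p q)"
    define a where "a = \<alpha> * disagreement w q + \<beta> * polarization q"
    have "0 < a"
      using assms(4-6) disagreement_fj_equilibrium_axis_pos[OF assms(1,2)]
        polarization_fj_equilibrium_axis_pos[OF assms(1,2)]
      by (auto simp: a_def q_def add_pos_nonneg add_nonneg_pos less_eq_real_def)
    have along_line: "F (fj_equilibrium w (s' + y *\<^sub>R axis v 1)) = F p + c * y + a * y^2" for y
      by (simp add: F_def p_def q_def c_def a_def fj_equilibrium_add_scaleR
          disagreement_add_scaleR polarization_add_scaleR algebra_simps)
    have at_endpoint: "c * (x - s'$v) + a * (x - s'$v)^2 \<le> 0" if "x = 0 \<or> x = 1" for x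
    proof -
      have "F (fj_equilibrium w (s' + (x - s'$v) *\<^sub>R axis v 1)) \<le> F p"
        using assms(9) coordinate_update_feasible[OF assms(7,8) changed, of x] that
        by (auto simp: F_def p_def)
      thus ?thesis by (simp add: along_line)
    qed
    show False
      using convex_quadratic_pos_at_endpoint[OF \<open>0 < a\<close>, of "0 - s'$v" "1 - s'$v" c]
        interior at_endpoint[of 0] at_endpoint[of 1] by linarith
  qed
qed

end
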